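(* Fix $k\in\mathbb Z^+$ and let $0<\varepsilon_1<0.001$. There exists $\varepsilon_0=\varepsilon_0(k,\varepsilon_1)$ with $0<\varepsilon_0<\varepsilon_1$ such that, for any population protocol $P$ with $k$ states and any configuration $z_0$, there exists $\varepsilon=\varepsilon(P,z_0)\in[\varepsilon_0,\varepsilon_1]$ such that for every rule $j$ of $P$ exactly one of the following holds: (i) for all $z\in B_{n^{\varepsilon_0}}(z_0)$, $p_j(z)\le n^{\varepsilon-1}$; (ii) for all $z\in B_{n^{\varepsilon_0}}(z_0)$, $p_j(z)\ge n^{24\varepsilon-1}$; and for every state $i\in\{1,\dots,k\}$ exactly one of the following holds: (iii) for all $z\in B_{n^{\varepsilon_0}}(z_0)$, $z^{(i)}\le n^{\varepsilon}$; (iv) for all $z\in B_{n^{\varepsilon_0}}(z_0)$, $z^{(i)}\ge n^{24\varepsilon}$.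
   Context: Population protocol with states $\{1,\dots,k\}$ on $n$ agents: in each step the scheduler picks an unordered pair of distinct agents uniformly at random; the protocol has rules $j=1,\dots,r$ (with $r\le k^4$) of the form $\{i_1(j),i_2(j)\}\to\{o_1(j),o_2(j)\}$, rule $j$ being executed with probability $q_j$ when the selected pair has states $\{i_1(j),i_2(j)\}$ (rule probabilities may depend on $n$). A configuration is $z=(z^{(1)},\dots,z^{(k)})\in\{0,\dots,n\}^k$ with $\sum_i z^{(i)}=n$, $z^{(i)}$ the number of agents in state $i$. $p_j(z)$ denotes the probability that rule $j$ is the next rule executed in configuration $z$ (so $p_j(z)=q_j\frac{z^{(i_1(j))}z^{(i_2(j))}}{n^2}(1-O(1/n))$). For $d>0$, the $d$-box around $z_0$ is $B_d(z_0)=\{z:\ z_0^{(i)}/d\le z^{(i)}\le d\max\{1,z_0^{(i)}\}\text{ for all }1\le i\le k\}$. *)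

theory Defs
  imports Complex_Main
begin

text \<open>States are 1..k. A configuration of n agents is a function z :: nat => nat
  giving the number of agents in each state; it vanishes outside {1..k} and
  sums to n.\<close>
definition config :: "nat \<Rightarrow> nat \<Rightarrow> (nat \<Rightarrow> nat) \<Rightarrow> bool" where
  "config k n z \<longleftrightarrow> (\<forall>i. i \<notin> {1..k} \<longrightarrow> z i = 0) \<and> (\<Sum>i\<in>{1..k}. z i) = n"

text \<open>A population protocol with k states and rules j = 1..r, rule j being
  {i1 j, i2 j} -> {o1 j, o2 j}, executed with probability q j when the selected
  pair has states {i1 j, i2 j}.\<close>
definition protocol ::
  "nat \<Rightarrow> nat \<Rightarrow> (nat \<Rightarrow> nat) \<Rightarrow> (nat \<Rightarrow> nat) \<Rightarrow> (nat \<Rightarrow> nat) \<Rightarrow> (nat \<Rightarrow> nat)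
   \<Rightarrow> (nat \<Rightarrow> real) \<Rightarrow> bool" where
  "protocol k r i1 i2 o1 o2 q \<longleftrightarrow>
     r \<le> k ^ 4 \<and>
     (\<forall>j\<in>{1..r}. i1 j \<in> {1..k} \<and> i2 j \<in> {1..k} \<and> o1 j \<in> {1..k} \<and> o2 j \<in> {1..k}
                 \<and> 0 \<le> q j \<and> q j \<le> 1) \<and>
     (\<forall>a\<in>{1..k}. \<forall>b\<in>{1..k}. (\<Sum>j | j \<in> {1..r} \<and> {i1 j, i2 j} = {a, b}. q j) \<le> 1)"

text \<open>Probability that a uniformly random unordered pair of distinct agents
  (out of n) has states {a, b} in configuration z.\<close>
definition pair_prob :: "nat \<Rightarrow> (nat \<Rightarrow> nat) \<Rightarrow> nat \<Rightarrow> nat \<Rightarrow> real" where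
  "pair_prob n z a b =
     (if a = b then real (z a choose 2) else real (z a) * real (z b)) / real (n choose 2)"

text \<open>p_j(z): probability that rule j is the next rule executed in configuration z.\<close>
definition rule_prob ::
  "nat \<Rightarrow> (nat \<Rightarrow> nat) \<Rightarrow> (nat \<Rightarrow> nat) \<Rightarrow> (nat \<Rightarrow> real) \<Rightarrow> nat \<Rightarrow> (nat \<Rightarrow> nat) \<Rightarrow> real" where
  "rule_prob n i1 i2 q j z = q j * pair_prob n z (i1 j) (i2 j)"

definition box :: "nat \<Rightarrow> nat \<Rightarrow> real \<Rightarrow> (nat \<Rightarrow> nat) \<Rightarrow> (nat \<Rightarrow> nat) set" where
  "box k n d z0 = {z. config k n z \<and>
     (\<forall>i\<in>{1..k}. real (z0 i) / d \<le> real (z i) \<and> real (z i) \<le> d * max 1 (real (z0 i)))}"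

end

(* On the box of radius d = n^e0, every state count and every rule probability f is either
   bounded by n^(eta - s) or varies by at most the factor n^eta (s = 0 for counts, s = 1 for
   probabilities): a count whose centre value is nonzero moves by a factor at most d^2, and
   once n is large, n^eta absorbs d^4 together with the constant factors of the pair counts,
   while for small n the box contains a single configuration.  Hence f straddles the gap
   (n^(e - s), n^(24 e - s)) for at most one of the scales e = eta 25^t, since consecutive
   scales differ by the factor 25 > 24 + 1.  There are at most k + k^4 quantities and
   k + k^4 + 1 scales, so some scale is straddled by none of them, and at that scale every
   quantity stays on one side of its gap throughout the box. *)
theory Submission
  imports Defs
begin

definition bounded_or_stable :: "'a set \<Rightarrow> ('a \<Rightarrow> real) \<Rightarrow> real \<Rightarrow> real \<Rightarrow> bool" where
  "bounded_or_stable S f B P \<longleftrightarrow> (\<forall>z\<in>S. f z \<le> B) \<or> (\<forall>z\<in>S. \<forall>z'\<in>S. f z \<le> P * f z')"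

definition straddles_gap :: "real \<Rightarrow> 'a set \<Rightarrow> ('a \<Rightarrow> real) \<Rightarrow> real \<Rightarrow> real \<Rightarrow> bool" where
  "straddles_gap x S f s e \<longleftrightarrow>
     (\<exists>z\<in>S. x powr (e - s) < f z) \<and> (\<exists>z\<in>S. f z < x powr (24 * e - s))"

lemma bounded_or_stable_const:
  assumes "\<And>z. z \<in> S \<Longrightarrow> f z = c" and "0 \<le> c" and "1 \<le> P"
  shows "bounded_or_stable S f B P"
  using assms mult_right_mono[of 1 P c] unfolding bounded_or_stable_def by simp

lemma bounded_or_stable_scale:
  assumes "bounded_or_stable S f B P" and "0 \<le> c" "c \<le> 1" and "\<And>z. 0 \<le> f z" "0 \<le> B"
  shows "bounded_or_stable S (\<lambda>z. c * f z) B P"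
  using assms unfolding bounded_or_stable_def
  by (smt (verit, ccfv_threshold) mult_left_le_one_le mult_left_mono mult.left_commute)

lemma bounded_or_stable_divide:
  assumes "bounded_or_stable S f B P" and "0 < c"
  shows "bounded_or_stable S (\<lambda>z. f z / c) (B / c) P"
  using assms unfolding bounded_or_stable_def by (auto simp: divide_right_mono)

lemma straddles_gap_scale_unique:
  fixes x \<eta> :: real
  assumes x: "1 < x" and \<eta>: "0 < \<eta>"
    and f: "bounded_or_stable S f (x powr (\<eta> - s)) (x powr \<eta>)"
    and t: "straddles_gap x S f s (\<eta> * 25 ^ t)" and t': "straddles_gap x S f s (\<eta> * 25 ^ t')"
  shows "t = t'"
proof -
  have no_distant_pair: False
    if scales: "\<eta> \<le> e" "25 * e \<le> e'" and gaps: "straddles_gap x S f s e" "straddles_gap x S f s e'"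
    for e e'
    using f unfolding bounded_or_stable_def
  proof
    assume bounded: "\<forall>z\<in>S. f z \<le> x powr (\<eta> - s)"
    obtain z where "z \<in> S" "x powr (e - s) < f z"
      using gaps(1) unfolding straddles_gap_def by blast
    moreover have "x powr (\<eta> - s) \<le> x powr (e - s)" using scales(1) x by (intro powr_mono) auto
    ultimately show False using bounded by force
  next
    assume stable: "\<forall>z\<in>S. \<forall>z'\<in>S. f z \<le> x powr \<eta> * f z'"
    obtain z1 z2 where z1: "z1 \<in> S" "x powr (e' - s) < f z1"
      and z2: "z2 \<in> S" "f z2 < x powr (24 * e - s)"
      using gaps unfolding straddles_gap_def by blast
    have "f z1 \<le> x powr \<eta> * f z2" using stable z1 z2 by blast
    also have "\<dots> < x powr \<eta> * x powr (24 * e - s)" using z2 x by simp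
    also have "\<dots> = x powr (\<eta> + 24 * e - s)" by (simp add: powr_add[symmetric] algebra_simps)
    also have "\<dots> \<le> x powr (e' - s)" using scales x by (intro powr_mono) auto
    finally show False using z1 by simp
  qed
  have "\<not> t < t'"
    if "straddles_gap x S f s (\<eta> * 25 ^ t)" "straddles_gap x S f s (\<eta> * 25 ^ t')" for t t'
  proof
    assume "t < t'"
    then have "(25::real) ^ Suc t \<le> 25 ^ t'" by (intro power_increasing) auto
    then have "25 * (\<eta> * 25 ^ t) \<le> \<eta> * 25 ^ t'" using \<eta> by simp
    moreover have "\<eta> \<le> \<eta> * 25 ^ t" using \<eta> by simp
    ultimately show False using no_distant_pair that by blast
  qed
  then show ?thesis using t t' by (meson linorder_neqE_nat)
qed

lemma not_straddles_gap_imp_dichotomy: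
  fixes x :: real
  assumes "1 < x" "0 < e" "z0 \<in> S" "\<not> straddles_gap x S f s e"
  shows "(\<forall>z\<in>S. f z \<le> x powr (e - s)) \<noteq> (\<forall>z\<in>S. x powr (24 * e - s) \<le> f z)"
proof -
  have "x powr (e - s) < x powr (24 * e - s)" using assms(1,2) by (intro powr_less_mono) auto
  then show ?thesis using assms(3,4) unfolding straddles_gap_def by force
qed

lemma exists_scale_avoiding:
  assumes "finite I" "card I \<le> N" and unique: "\<And>m t t'. m \<in> I \<Longrightarrow> B m t \<Longrightarrow> B m t' \<Longrightarrow> t = t'"
  shows "\<exists>t\<le>N. \<forall>m\<in>I. \<not> B m t"
proof -
  have "{t. \<exists>m\<in>I. B m t} \<subseteq> (\<lambda>m. THE t. B m t) ` I"
    using unique by (blast intro: the_equality[symmetric])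
  then have "card ({..N} \<inter> {t. \<exists>m\<in>I. B m t}) \<le> card I"
    by (meson assms(1) card_image_le card_mono finite_imageI inf_le2 order_trans)
  also have "\<dots> < card {..N}" using assms(2) by simp
  finally have "\<not> {..N} \<subseteq> {t. \<exists>m\<in>I. B m t}" by (metis Int_absorb2 less_irrefl)
  then show ?thesis by auto
qed

lemma box_config: "z \<in> box k n d z0 \<Longrightarrow> config k n z"
  unfolding box_def by auto

lemma box_lower: "z \<in> box k n d z0 \<Longrightarrow> i \<in> {1..k} \<Longrightarrow> real (z0 i) / d \<le> real (z i)"
  unfolding box_def by auto

lemma box_upper: "z \<in> box k n d z0 \<Longrightarrow> i \<in> {1..k} \<Longrightarrow> real (z i) \<le> d * max 1 (real (z0 i))"
  unfolding box_def by auto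

lemma config_le: "config k n z \<Longrightarrow> i \<in> {1..k} \<Longrightarrow> z i \<le> n"
  unfolding config_def by (metis finite_atLeastAtMost member_le_sum zero_le)

lemma self_mem_box:
  assumes "config k n z0" "1 \<le> d"
  shows "z0 \<in> box k n d z0"
proof -
  have "real (z0 i) / d \<le> real (z0 i)" "real (z0 i) \<le> d * max 1 (real (z0 i))" for i
    using assms(2) mult_mono[of 1 d "real (z0 i)" "max 1 (real (z0 i))"]
    by (auto simp: divide_le_eq mult_le_cancel_left1)
  then show ?thesis using assms(1) unfolding box_def by auto
qed

text \<open>If every count may shrink by less than one agent, none can shrink at all, and since the
  total is fixed none can grow either.\<close>
lemma box_trivial:
  assumes z0: "config k n z0" and n: "1 \<le> n" and d: "0 < d" "d < 1 + 1 / real n"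
    and z: "z \<in> box k n d z0" and i: "i \<in> {1..k}"
  shows "z i = z0 i"
proof -
  have ge: "z0 l \<le> z l" if l: "l \<in> {1..k}" for l
  proof (cases "z0 l = 0")
    case False
    have "d * (real (z0 l) - 1) \<le> (1 + 1 / real n) * (real (z0 l) - 1)"
      using False d by (intro mult_right_mono) auto
    also have "\<dots> = real (z0 l) - 1 + (real (z0 l) - 1) / real n"
      by (simp add: algebra_simps add_divide_distrib[symmetric])
    also have "(real (z0 l) - 1) / real n < 1"
      using config_le[OF z0 l] n by (simp add: divide_less_eq)
    finally have "real (z0 l) - 1 < real (z0 l) / d" using d by (simp add: field_simps)
    also have "\<dots> \<le> real (z l)" using box_lower[OF z l] .
    finally show ?thesis by simp
  qed simp
  have "sum z0 {1..k} = sum z {1..k}"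
    using z0 box_config[OF z] unfolding config_def by simp
  from sum_mono_inv[OF this] ge i show ?thesis by auto
qed

lemma box_absent_state: "z \<in> box k n d z0 \<Longrightarrow> i \<in> {1..k} \<Longrightarrow> z0 i = 0 \<Longrightarrow> real (z i) \<le> d"
  using box_upper by fastforce

lemma box_present_state:
  assumes "z \<in> box k n d z0" "i \<in> {1..k}" "0 < d" "z0 i \<noteq> 0"
  shows "1 \<le> z i"
proof -
  have "0 < real (z0 i) / d" using assms(3,4) by simp
  then have "0 < real (z i)" using box_lower[OF assms(1,2)] by linarith
  then show ?thesis by simp
qed

lemma box_ratio:
  assumes z: "z \<in> box k n d z0" and z': "z' \<in> box k n d z0" and i: "i \<in> {1..k}"
    and d: "1 \<le> d" and z'_pos: "1 \<le> z' i"
  shows "real (z i) \<le> d\<^sup>2 * real (z' i)"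
proof (cases "z0 i = 0")
  case True
  have "real (z i) \<le> d" using box_absent_state[OF z i True] .
  also have "1 \<le> d * real (z' i)" using d z'_pos mult_mono[of 1 d 1 "real (z' i)"] by simp
  then have "d * 1 \<le> d * (d * real (z' i))" using d by (intro mult_left_mono) auto
  finally show ?thesis by (simp add: power2_eq_square)
next
  case False
  have "real (z i) \<le> d * real (z0 i)" using box_upper[OF z i] False by simp
  also have "real (z0 i) \<le> d * real (z' i)"
    using box_lower[OF z' i] d by (simp add: divide_le_eq mult.commute)
  then have "d * real (z0 i) \<le> d * (d * real (z' i))" using d by simp
  finally show ?thesis by (simp add: power2_eq_square)
qed

lemma box_count_bounded_or_stable:
  assumes i: "i \<in> {1..k}" and d: "1 \<le> d" and P: "d\<^sup>2 \<le> P"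
  shows "bounded_or_stable (box k n d z0) (\<lambda>z. real (z i)) P P"
proof (cases "z0 i = 0")
  case True
  have "d \<le> d\<^sup>2" using d by (simp add: power2_eq_square)
  then have "real (z i) \<le> P" if "z \<in> box k n d z0" for z
    using box_absent_state[OF that i True] P by linarith
  then show ?thesis unfolding bounded_or_stable_def by blast
next
  case False
  have "real (z i) \<le> P * real (z' i)" if "z \<in> box k n d z0" "z' \<in> box k n d z0" for z z'
    using box_ratio[OF that i d box_present_state[OF that(2) i _ False]] d
      mult_right_mono[OF P, of "real (z' i)"] by simp
  then show ?thesis unfolding bounded_or_stable_def by blast
qed

lemma real_choose_two: "real (m choose 2) = real m * (real m - 1) / 2"
  by (simp add: binomial_gbinomial gbinomial_pochhammer' numeral_2_eq_2 pochhammer_Suc)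

lemma real_choose_two_le: "real (m choose 2) \<le> real m ^ 2 / 2"
  unfolding real_choose_two by (simp add: power2_eq_square divide_right_mono mult_left_mono)

lemma square_le_four_choose_two: "2 \<le> m \<Longrightarrow> real m ^ 2 \<le> 4 * real (m choose 2)"
  unfolding real_choose_two by (simp add: power2_eq_square algebra_simps)

lemma box_product_bounded_or_stable:
  assumes n: "2 \<le> n" and a: "a \<in> {1..k}" and b: "b \<in> {1..k}"
    and d: "1 \<le> d" and P: "4 * d ^ 4 \<le> P"
  shows "bounded_or_stable (box k n d z0) (\<lambda>z. real (z a) * real (z b)) (P * (real n - 1) / 2) P"
proof (cases "z0 a = 0 \<or> z0 b = 0")
  case True
  have "real (z a) * real (z b) \<le> P * (real n - 1) / 2" if z: "z \<in> box k n d z0" for z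
  proof -
    have "real (z a) \<le> real n" "real (z b) \<le> real n"
      using config_le[OF box_config[OF z]] a b by auto
    with True have "real (z a) * real (z b) \<le> d * real n"
      using box_absent_state[OF z a] box_absent_state[OF z b] d
        mult_mono[of "real (z a)" d "real (z b)" "real n"]
        mult_mono[of "real (z a)" "real n" "real (z b)" d] by (auto simp: mult.commute)
    also have "\<dots> \<le> 4 * d * (real n - 1) / 2" using n d by simp
    also have "\<dots> \<le> P * (real n - 1) / 2"
      using n d P power_increasing[of 1 4 d] by (intro divide_right_mono mult_right_mono) auto
    finally show ?thesis .
  qed
  then show ?thesis unfolding bounded_or_stable_def by blast
next
  case False
  have "real (z a) * real (z b) \<le> P * (real (z' a) * real (z' b))"
    if z: "z \<in> box k n d z0" and z': "z' \<in> box k n d z0" for z z'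
  proof -
    have "real (z a) \<le> d\<^sup>2 * real (z' a)" "real (z b) \<le> d\<^sup>2 * real (z' b)"
      using box_ratio[OF z z' _ d box_present_state[OF z' _ _]] a b d False by auto
    then have "real (z a) * real (z b) \<le> (d\<^sup>2 * real (z' a)) * (d\<^sup>2 * real (z' b))"
      by (intro mult_mono) auto
    also have "\<dots> = d ^ 4 * (real (z' a) * real (z' b))" by algebra
    also have "\<dots> \<le> P * (real (z' a) * real (z' b))"
      using P one_le_power[OF d, of 4] by (intro mult_right_mono) auto
    finally show ?thesis .
  qed
  then show ?thesis unfolding bounded_or_stable_def by blast
qed

lemma box_choose_two_bounded_or_stable:
  assumes n: "2 \<le> n" and a: "a \<in> {1..k}" and d: "1 \<le> d" and P: "4 * d ^ 4 \<le> P"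
  shows "bounded_or_stable (box k n d z0) (\<lambda>z. real (z a choose 2)) (P * (real n - 1) / 2) P"
proof (cases "\<forall>z\<in>box k n d z0. 2 \<le> z a")
  case True
  have "real (z a choose 2) \<le> P * real (z' a choose 2)"
    if z: "z \<in> box k n d z0" and z': "z' \<in> box k n d z0" for z z'
  proof -
    have "real (z a) \<le> d\<^sup>2 * real (z' a)" using box_ratio[OF z z' a d] True z' by fastforce
    then have "real (z a) ^ 2 \<le> (d\<^sup>2 * real (z' a)) ^ 2" by (intro power_mono) auto
    also have "\<dots> = d ^ 4 * real (z' a) ^ 2" by algebra
    also have "\<dots> \<le> d ^ 4 * (4 * real (z' a choose 2))"
      using True z' d by (intro mult_left_mono square_le_four_choose_two) auto
    finally have "real (z a choose 2) \<le> 2 * d ^ 4 * real (z' a choose 2)"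
      using real_choose_two_le[of "z a"] by simp
    also have "\<dots> \<le> P * real (z' a choose 2)"
      using P one_le_power[OF d, of 4] by (intro mult_right_mono) auto
    finally show ?thesis .
  qed
  then show ?thesis unfolding bounded_or_stable_def by blast
next
  case False
  then obtain z' where z': "z' \<in> box k n d z0" and "real (z' a) \<le> 1" by fastforce
  have "real (z0 a) \<le> real (z' a) * d" using box_lower[OF z' a] d by (simp add: divide_le_eq)
  also have "\<dots> \<le> d" using \<open>real (z' a) \<le> 1\<close> d by (simp add: mult_left_le_one_le)
  finally have "max 1 (real (z0 a)) \<le> d" using d by simp
  then have small: "real (z a) \<le> d\<^sup>2" if z: "z \<in> box k n d z0" for z
    using order_trans[OF box_upper[OF z a] mult_left_mono] d by (simp add: power2_eq_square)
  have "real (z a choose 2) \<le> P * (real n - 1) / 2" if z: "z \<in> box k n d z0" for z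
  proof -
    have "real (z a choose 2) \<le> real (z a) ^ 2 / 2" by (rule real_choose_two_le)
    also have "\<dots> \<le> (d\<^sup>2) ^ 2 / 2" using small[OF z] by (intro divide_right_mono power_mono) auto
    also have "\<dots> \<le> P / 2" using P one_le_power[OF d, of 4] by (simp add: power_mult[symmetric])
    also have "\<dots> \<le> P * (real n - 1) / 2"
      using n P one_le_power[OF d, of 4] mult_left_mono[of 1 "real n - 1" P] by simp
    finally show ?thesis .
  qed
  then show ?thesis unfolding bounded_or_stable_def by blast
qed

lemma box_pair_prob_bounded_or_stable:
  assumes n: "2 \<le> n" and a: "a \<in> {1..k}" and b: "b \<in> {1..k}"
    and d: "1 \<le> d" and P: "4 * d ^ 4 \<le> P"
  shows "bounded_or_stable (box k n d z0) (\<lambda>z. pair_prob n z a b) (P / real n) P"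
proof -
  let ?pairs = "real (n choose 2)"
  have pairs: "?pairs = real n * (real n - 1) / 2" by (rule real_choose_two)
  then have "0 < ?pairs" using n by simp
  moreover have "bounded_or_stable (box k n d z0)
      (\<lambda>z. if a = b then real (z a choose 2) else real (z a) * real (z b)) (P * (real n - 1) / 2) P"
    using box_choose_two_bounded_or_stable[OF n a d P] box_product_bounded_or_stable[OF n a b d P]
    by (cases "a = b") simp_all
  ultimately have "bounded_or_stable (box k n d z0) (\<lambda>z. pair_prob n z a b)
      (P * (real n - 1) / 2 / ?pairs) P"
    unfolding pair_prob_def by (intro bounded_or_stable_divide)
  moreover have "P * (real n - 1) / 2 / ?pairs = P / real n" using n unfolding pairs by simp
  ultimately show ?thesis by simp
qed

lemma box_rule_prob_bounded_or_stable:
  assumes "protocol k r i1 i2 o1 o2 q" "j \<in> {1..r}"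
    and "2 \<le> n" "1 \<le> d" "4 * d ^ 4 \<le> P"
  shows "bounded_or_stable (box k n d z0) (rule_prob n i1 i2 q j) (P / real n) P"
proof -
  have rule: "i1 j \<in> {1..k}" "i2 j \<in> {1..k}" "0 \<le> q j" "q j \<le> 1"
    using assms(1,2) unfolding protocol_def by auto
  have "0 \<le> P" using assms(5) one_le_power[OF assms(4), of 4] by linarith
  then show ?thesis
    unfolding rule_prob_def
    using box_pair_prob_bounded_or_stable[OF assms(3) rule(1,2) assms(4,5)] rule(3,4)
    by (intro bounded_or_stable_scale) (auto simp: pair_prob_def)
qed

lemma box_quantities_bounded_or_stable:
  assumes n: "2 \<le> n" and prot: "protocol k r i1 i2 o1 o2 q" and z0: "config k n z0"
    and d: "1 \<le> d" and P: "1 \<le> P" and box: "d < 1 + 1 / real n \<or> 4 * d ^ 4 \<le> P"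
  shows "i \<in> {1..k} \<Longrightarrow> bounded_or_stable (box k n d z0) (\<lambda>z. real (z i)) P P"
    and "j \<in> {1..r} \<Longrightarrow> bounded_or_stable (box k n d z0) (rule_prob n i1 i2 q j) (P / real n) P"
proof -
  have rules: "i1 j \<in> {1..k}" "i2 j \<in> {1..k}" "0 \<le> q j" if "j \<in> {1..r}" for j
    using prot that unfolding protocol_def by auto
  have n1: "1 \<le> n" and d0: "0 < d" using n d by auto
  consider (trivial) "\<And>z i. z \<in> box k n d z0 \<Longrightarrow> i \<in> {1..k} \<Longrightarrow> z i = z0 i" | (wide) "4 * d ^ 4 \<le> P"
    using box box_trivial[OF z0 n1 d0] by blast
  note cases = this
  show "bounded_or_stable (box k n d z0) (\<lambda>z. real (z i)) P P" if i: "i \<in> {1..k}"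
  proof (cases rule: cases)
    case trivial
    then show ?thesis using i P by (intro bounded_or_stable_const[where c = "real (z0 i)"]) auto
  next
    case wide
    have "d\<^sup>2 \<le> d ^ 4" using d by (intro power_increasing) auto
    then show ?thesis
      using wide one_le_power[OF d, of 4] by (intro box_count_bounded_or_stable[OF i d]) auto
  qed
  show "bounded_or_stable (box k n d z0) (rule_prob n i1 i2 q j) (P / real n) P" if j: "j \<in> {1..r}"
  proof (cases rule: cases)
    case trivial
    then show ?thesis using rules[OF j] P
      by (intro bounded_or_stable_const[where c = "rule_prob n i1 i2 q j z0"])
        (auto simp: rule_prob_def pair_prob_def)
  next
    case wide
    then show ?thesis using box_rule_prob_bounded_or_stable[OF prot j n d] by blast
  qed
qed

text \<open>For n below a threshold T the box of radius n powr e0 is trivial, and above T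
  the power n powr \<eta> absorbs the constant 4.\<close>
lemma box_exponent_exists:
  fixes \<eta> :: real
  assumes \<eta>: "0 < \<eta>"
  obtains e0 where "0 < e0" "e0 < \<eta>"
    "\<And>n. 2 \<le> n \<Longrightarrow> real n powr e0 < 1 + 1 / real n \<or> 4 * (real n powr e0) ^ 4 \<le> real n powr \<eta>"
proof
  define T :: real where "T = 4 powr (2 / \<eta>)"
  define e0 where "e0 = min (\<eta> / 8) (ln (1 + 1 / T) / ln T)"
  have T: "1 < T" unfolding T_def using \<eta> by simp
  then show e0: "0 < e0" using \<eta> ln_gt_zero[of "1 + 1 / T"] unfolding e0_def by simp
  show "e0 < \<eta>" using \<eta> unfolding e0_def by simp
  fix n :: nat
  assume n: "2 \<le> n"
  show "real n powr e0 < 1 + 1 / real n \<or> 4 * (real n powr e0) ^ 4 \<le> real n powr \<eta>"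
  proof (cases "real n < T")
    case True
    have "real n powr e0 \<le> T powr e0" using True e0 by (intro powr_mono2) auto
    also have "\<dots> \<le> T powr (ln (1 + 1 / T) / ln T)" using T by (intro powr_mono) (auto simp: e0_def)
    also have "\<dots> = 1 + 1 / T" using T by (simp add: powr_def add_pos_pos)
    also have "\<dots> < 1 + 1 / real n" using True n by (simp add: frac_less2)
    finally show ?thesis ..
  next
    case False
    have "4 = T powr (\<eta> / 2)" unfolding T_def using \<eta> by (simp add: powr_powr)
    also have "\<dots> \<le> real n powr (\<eta> / 2)" using False T \<eta> by (intro powr_mono2) auto
    finally have four: "4 \<le> real n powr (\<eta> / 2)" .
    have "(real n powr e0) ^ 4 = real n powr (4 * e0)"
      using n by (simp add: powr_realpow[symmetric] powr_powr mult.commute)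
    also have "\<dots> \<le> real n powr (\<eta> / 2)" using n by (intro powr_mono) (auto simp: e0_def)
    finally have "4 * (real n powr e0) ^ 4 \<le> real n powr (\<eta> / 2) * real n powr (\<eta> / 2)"
      using four by (intro mult_mono) auto
    then show ?thesis by (simp add: powr_add[symmetric])
  qed
qed

lemma exists_unstraddled_scale:
  fixes \<eta> d :: real
  assumes n: "2 \<le> n" and prot: "protocol k r i1 i2 o1 o2 q" and z0: "config k n z0"
    and \<eta>: "0 < \<eta>" and d: "1 \<le> d" and box: "d < 1 + 1 / real n \<or> 4 * d ^ 4 \<le> real n powr \<eta>"
  shows "\<exists>t\<le>k + k ^ 4.
    (\<forall>j\<in>{1..r}. \<not> straddles_gap (real n) (box k n d z0) (rule_prob n i1 i2 q j) 1 (\<eta> * 25 ^ t)) \<and>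
    (\<forall>i\<in>{1..k}. \<not> straddles_gap (real n) (box k n d z0) (\<lambda>z. real (z i)) 0 (\<eta> * 25 ^ t))"
proof -
  let ?S = "box k n d z0"
  define f where "f = case_sum (\<lambda>i z. real (z i)) (rule_prob n i1 i2 q)"
  define s :: "nat + nat \<Rightarrow> real" where "s = case_sum (\<lambda>_. 0) (\<lambda>_. 1)"
  have x: "1 < real n" using n by simp
  have P: "1 \<le> real n powr \<eta>" using n \<eta> by (intro ge_one_powr_ge_zero) auto
  have bounded_or_stable: "bounded_or_stable ?S (f m) (real n powr (\<eta> - s m)) (real n powr \<eta>)"
    if "m \<in> {1..k} <+> {1..r}" for m
    using that box_quantities_bounded_or_stable[OF n prot z0 d P box] n
    by (auto simp: f_def s_def powr_diff)
  have unique: "t = t'" if "m \<in> {1..k} <+> {1..r}"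
    and "straddles_gap (real n) ?S (f m) (s m) (\<eta> * 25 ^ t)"
    and "straddles_gap (real n) ?S (f m) (s m) (\<eta> * 25 ^ t')" for m t t'
    using straddles_gap_scale_unique[OF x \<eta> bounded_or_stable[OF that(1)] that(2,3)] .
  have card: "card ({1..k} <+> {1..r}) \<le> k + k ^ 4"
    using prot by (simp add: card_Plus protocol_def)
  have "\<exists>t\<le>k + k ^ 4.
      \<forall>m\<in>{1..k} <+> {1..r}. \<not> straddles_gap (real n) ?S (f m) (s m) (\<eta> * 25 ^ t)"
    by (rule exists_scale_avoiding[OF _ card]) (simp, fact unique)
  then obtain t where t: "t \<le> k + k ^ 4"
    and avoid: "\<And>m. m \<in> {1..k} <+> {1..r} \<Longrightarrow> \<not> straddles_gap (real n) ?S (f m) (s m) (\<eta> * 25 ^ t)"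
    by blast
  show ?thesis
    using t avoid[OF InlI] avoid[OF InrI] by (auto simp: f_def s_def)
qed

lemma exists_scale_dichotomy:
  fixes \<eta> e0 :: real
  assumes n: "2 \<le> n" and prot: "protocol k r i1 i2 o1 o2 q" and z0: "config k n z0"
    and \<eta>: "0 < \<eta>" and e0: "0 < e0" "e0 \<le> \<eta>"
    and radius: "real n powr e0 < 1 + 1 / real n \<or> 4 * (real n powr e0) ^ 4 \<le> real n powr \<eta>"
  shows "\<exists>\<epsilon>. e0 \<le> \<epsilon> \<and> \<epsilon> \<le> \<eta> * 25 ^ (k + k ^ 4) \<and>
    (\<forall>j\<in>{1..r}.
       (\<forall>z\<in>box k n (real n powr e0) z0. rule_prob n i1 i2 q j z \<le> real n powr (\<epsilon> - 1)) \<noteq>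
       (\<forall>z\<in>box k n (real n powr e0) z0. rule_prob n i1 i2 q j z \<ge> real n powr (24 * \<epsilon> - 1))) \<and>
    (\<forall>i\<in>{1..k}.
       (\<forall>z\<in>box k n (real n powr e0) z0. real (z i) \<le> real n powr \<epsilon>) \<noteq>
       (\<forall>z\<in>box k n (real n powr e0) z0. real (z i) \<ge> real n powr (24 * \<epsilon>)))"
proof -
  let ?S = "box k n (real n powr e0) z0"
  have d: "1 \<le> real n powr e0" using n e0 by (intro ge_one_powr_ge_zero) auto
  from exists_unstraddled_scale[OF n prot z0 \<eta> d radius] obtain t where t: "t \<le> k + k ^ 4"
    and rules: "\<forall>j\<in>{1..r}. \<not> straddles_gap (real n) ?S (rule_prob n i1 i2 q j) 1 (\<eta> * 25 ^ t)"
    and states: "\<forall>i\<in>{1..k}. \<not> straddles_gap (real n) ?S (\<lambda>z. real (z i)) 0 (\<eta> * 25 ^ t)"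
    by blast
  have "\<eta> \<le> \<eta> * 25 ^ t" using \<eta> mult_left_mono[of 1 "25 ^ t" \<eta>] by simp
  then have "e0 \<le> \<eta> * 25 ^ t" using e0 by linarith
  moreover have "\<eta> * 25 ^ t \<le> \<eta> * 25 ^ (k + k ^ 4)"
    using t \<eta> by (intro mult_left_mono power_increasing) auto
  moreover have dichotomy: "(\<forall>z\<in>?S. f z \<le> real n powr (\<eta> * 25 ^ t - s)) \<noteq>
      (\<forall>z\<in>?S. real n powr (24 * (\<eta> * 25 ^ t) - s) \<le> f z)"
    if "\<not> straddles_gap (real n) ?S f s (\<eta> * 25 ^ t)" for f s
    using n \<eta> self_mem_box[OF z0 d] that by (intro not_straddles_gap_imp_dichotomy) auto
  ultimately show ?thesis
    using rules states dichotomy[where s = 1] dichotomy[where s = 0, simplified]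
    by (intro exI[of _ "\<eta> * 25 ^ t"]) auto
qed

theorem lemma26:
  fixes k :: nat and \<epsilon>\<^sub>1 :: real
  assumes "k \<ge> 1" and "0 < \<epsilon>\<^sub>1" and "\<epsilon>\<^sub>1 < 0.001"
  shows "\<exists>\<epsilon>\<^sub>0. 0 < \<epsilon>\<^sub>0 \<and> \<epsilon>\<^sub>0 < \<epsilon>\<^sub>1 \<and>
    (\<forall>n r i1 i2 o1 o2 q z0. n \<ge> 2 \<longrightarrow> protocol k r i1 i2 o1 o2 q \<longrightarrow> config k n z0 \<longrightarrow>
      (\<exists>\<epsilon>. \<epsilon>\<^sub>0 \<le> \<epsilon> \<and> \<epsilon> \<le> \<epsilon>\<^sub>1 \<and>
        (\<forall>j\<in>{1..r}.
           (\<forall>z\<in>box k n (real n powr \<epsilon>\<^sub>0) z0. rule_prob n i1 i2 q j z \<le> real n powr (\<epsilon> - 1)) \<noteq>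
           (\<forall>z\<in>box k n (real n powr \<epsilon>\<^sub>0) z0. rule_prob n i1 i2 q j z \<ge> real n powr (24 * \<epsilon> - 1))) \<and>
        (\<forall>i\<in>{1..k}.
           (\<forall>z\<in>box k n (real n powr \<epsilon>\<^sub>0) z0. real (z i) \<le> real n powr \<epsilon>) \<noteq>
           (\<forall>z\<in>box k n (real n powr \<epsilon>\<^sub>0) z0. real (z i) \<ge> real n powr (24 * \<epsilon>)))))"
proof -
  define \<eta> :: real where "\<eta> = \<epsilon>\<^sub>1 / 25 ^ (k + k ^ 4)"
  have \<eta>: "0 < \<eta>" "\<eta> * 25 ^ (k + k ^ 4) = \<epsilon>\<^sub>1" using assms(2) by (simp_all add: \<eta>_def)
  then have "\<eta> \<le> \<epsilon>\<^sub>1" using mult_left_mono[of 1 "25 ^ (k + k ^ 4)" \<eta>] by simp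
  obtain e0 where e0: "0 < e0" "e0 < \<eta>" and radius: "\<And>n. 2 \<le> n \<Longrightarrow>
      real n powr e0 < 1 + 1 / real n \<or> 4 * (real n powr e0) ^ 4 \<le> real n powr \<eta>"
    using box_exponent_exists[OF \<eta>(1)] by blast
  show ?thesis
    using e0 \<open>\<eta> \<le> \<epsilon>\<^sub>1\<close>
      exists_scale_dichotomy[where k = k, OF _ _ _ \<eta>(1) e0(1) less_imp_le[OF e0(2)] radius]
    unfolding \<eta>(2) by (intro exI[of _ e0]) auto
qed

end
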